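(* Let $\lambda>0$ and let $(X_1,\dots,X_n)$ be a random vector with joint survival function $$\Pr(X_1>x_1,\dots,X_n>x_n)=\exp\big(-\lambda\sqrt{x_1+\dots+x_n}\big),\qquad x_1,\dots,x_n\ge 0,$$ i.e. each $X_i$ is Weibull with shape parameter $1/2$ and survival function $\exp(-\lambda\sqrt{x})$, and the survival copula is the Gumbel copula with generator $\phi(t)=(-\log t)^2$. Then the pdf of $S_n=X_1+\dots+X_n$ is $$f_{S_n}(x)=\frac{\lambda}{2^{2n-1}\Gamma(n)}\sum_{k=0}^{n-1}\frac{(2(n-1)-k)!}{(n-k-1)!\,k!}(2\lambda)^k x^{(k-1)/2}e^{-\lambda\sqrt{x}},\qquad x> 0,$$ and $f_{S_n}(x)=0$ for $x<0$. *)

theory Defs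
  imports "HOL-Probability.Probability"
begin

end

theory Submission
  imports Defs
begin

text \<open>
  Suppose the survival function of \<open>(X 1, \<dots>, X n)\<close> is \<open>\<Psi> (x 1 + \<dots> + x n)\<close>, where the
  functions \<open>E k\<close>, \<open>(-1)^k\<close> times the \<open>k\<close>-th derivative of \<open>\<Psi>\<close>, are nonnegative and vanish
  at infinity. Then the sum \<open>S n\<close> has density \<open>s^(n-1) / (n-1)! * E n s\<close>, by induction on \<open>n\<close>: on the event
  \<open>X n > y\<close> the first \<open>n - 1\<close> variables have survival function \<open>\<Psi> (\<dots> + y)\<close>, so the
  induction hypothesis gives the law of \<open>S (n-1)\<close> on that event; differentiating in \<open>y\<close>
  yields the joint density \<open>s^(n-2) / (n-2)! * E n (s + y)\<close> of \<open>(S (n-1), X n)\<close>, and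
  integrating it along \<open>s + y = u\<close> gives the claim. For \<open>\<Psi> s = exp (-\<lambda> sqrt s)\<close> the
  derivatives are \<open>exp (-\<lambda> sqrt s)\<close> times a combination of half-integer powers of \<open>s\<close>
  whose coefficients satisfy a linear recursion with an explicit factorial solution; that
  solution is the stated density.
\<close>

section \<open>Sums of variables with survival function depending on the sum only\<close>

definition neg_derivative_chain :: "(nat \<Rightarrow> real \<Rightarrow> real) \<Rightarrow> bool" where
  "neg_derivative_chain E \<longleftrightarrow>
     (\<forall>k s. 0 < s \<longrightarrow> (E k has_real_derivative - E (Suc k) s) (at s)) \<and>
     (\<forall>k s. 0 < s \<longrightarrow> 0 \<le> E k s) \<and> (\<forall>k. (E k \<longlongrightarrow> 0) at_top) \<and>
     (\<forall>k. E k \<in> borel_measurable borel)"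

lemma neg_derivative_chainD:
  assumes "neg_derivative_chain E"
  shows "0 < s \<Longrightarrow> (E k has_real_derivative - E (Suc k) s) (at s)"
    and "0 < s \<Longrightarrow> 0 \<le> E k s"
    and "(E k \<longlongrightarrow> 0) at_top"
    and "E k \<in> borel_measurable borel"
  using assms by (auto simp: neg_derivative_chain_def)

lemma neg_derivative_chain_shift:
  assumes E: "neg_derivative_chain E" and "0 \<le> y"
  shows "neg_derivative_chain (\<lambda>k s. E k (s + y))"
  unfolding neg_derivative_chain_def
proof (intro conjI allI impI)
  fix k and s :: real
  assume "0 < s"
  with \<open>0 \<le> y\<close> have "0 < s + y"
    by simp
  have "((\<lambda>s. s + y) has_real_derivative 1) (at s)"
    by (auto intro!: derivative_eq_intros)
  with neg_derivative_chainD(1)[OF E \<open>0 < s + y\<close>]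
  show "((\<lambda>s. E k (s + y)) has_real_derivative - E (Suc k) (s + y)) (at s)"
    using DERIV_chain2[of "E k" _ "\<lambda>s. s + y" s 1 UNIV] by simp
  show "0 \<le> E k (s + y)"
    using neg_derivative_chainD(2)[OF E \<open>0 < s + y\<close>] .
next
  fix k
  have "filterlim (\<lambda>s. s + y) at_top at_top"
    using filterlim_tendsto_add_at_top[OF tendsto_const[of y] filterlim_ident] by (simp add: add.commute)
  with neg_derivative_chainD(3)[OF E] show "((\<lambda>s. E k (s + y)) \<longlongrightarrow> 0) at_top"
    by (rule filterlim_compose)
  have [measurable]: "E k \<in> borel_measurable borel"
    using E by (rule neg_derivative_chainD)
  show "(\<lambda>s. E k (s + y)) \<in> borel_measurable borel"
    by measurable
qed

lemma nn_integral_neg_derivative_chain: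
  assumes E: "neg_derivative_chain E" and "0 < y"
  shows "(\<integral>\<^sup>+ s. ennreal (E (Suc k) s) * indicator {y<..} s \<partial>lborel) = ennreal (E k y)"
proof -
  have "(\<integral>\<^sup>+ s. ennreal (E (Suc k) s) * indicator {y<..} s \<partial>lborel)
      = (\<integral>\<^sup>+ s. ennreal (E (Suc k) s) * indicator {y..} s \<partial>lborel)"
    using AE_lborel_singleton[of y]
    by (intro nn_integral_cong_AE) (auto elim!: eventually_mono split: split_indicator)
  also have "\<dots> = ennreal (0 - (- E k y))"
  proof (rule nn_integral_FTC_atLeast)
    show "E (Suc k) \<in> borel_measurable borel"
      using E by (rule neg_derivative_chainD)
    show "((\<lambda>s. - E k s) has_real_derivative E (Suc k) x) (at x)" if "y \<le> x" for x
      using DERIV_minus[OF neg_derivative_chainD(1)[OF E]] that \<open>0 < y\<close> by simp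
    show "0 \<le> E (Suc k) x" if "y \<le> x" for x
      using neg_derivative_chainD(2)[OF E] that \<open>0 < y\<close> by simp
    show "((\<lambda>s. - E k s) \<longlongrightarrow> 0) at_top"
      using tendsto_minus[OF neg_derivative_chainD(3)[OF E]] by simp
  qed
  finally show ?thesis
    by simp
qed

definition rays_split_at_0 :: "real set set" where
  "rays_split_at_0 = {{y<..} | y. 0 < y} \<union> {{..a} | a. a \<le> 0} \<union> {{}}"

lemma Int_stable_rays_split_at_0: "Int_stable rays_split_at_0"
  unfolding Int_stable_def
proof (intro ballI)
  fix A B
  assume "A \<in> rays_split_at_0" "B \<in> rays_split_at_0"
  moreover have "{y<..} \<inter> {z<..} = {max y z<..}" "{..a} \<inter> {..b} = {..min a b}" for y z a b :: real
    by auto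
  moreover have "0 < y \<Longrightarrow> a \<le> 0 \<Longrightarrow> {y<..} \<inter> {..a} = {} \<and> {..a} \<inter> {y<..} = {}" for y a :: real
    by auto
  ultimately show "A \<inter> B \<in> rays_split_at_0"
    unfolding rays_split_at_0_def by auto
qed

lemma sets_borel_eq_sigma_rays_split_at_0: "sets borel = sigma_sets UNIV rays_split_at_0"
proof -
  have borel: "sets borel = sigma_sets UNIV (range (\<lambda>a. {..a::real}))"
    by (subst borel_eq_atMost) (simp add: sets_measure_of)
  also have "\<dots> = sigma_sets UNIV rays_split_at_0"
  proof (rule sigma_sets_eqI)
    fix A
    assume "A \<in> range (\<lambda>a. {..a::real})"
    then obtain a where A: "A = {..a}"
      by auto
    show "A \<in> sigma_sets UNIV rays_split_at_0"
    proof (cases "a \<le> 0")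
      case False
      then have "{a<..} \<in> sigma_sets UNIV rays_split_at_0"
        unfolding rays_split_at_0_def by auto
      moreover have "UNIV - {a<..} = {..a}"
        by auto
      ultimately show ?thesis
        unfolding A by (metis sigma_sets.Compl)
    qed (auto simp: A rays_split_at_0_def)
  next
    fix B
    assume "B \<in> rays_split_at_0"
    then show "B \<in> sigma_sets UNIV (range (\<lambda>a. {..a::real}))"
      unfolding borel[symmetric] rays_split_at_0_def by auto
  qed
  finally show ?thesis .
qed

lemma measure_eqI_rays_split_at_0:
  fixes \<mu> \<nu> :: "real measure"
  assumes "sets \<mu> = sets borel" "sets \<nu> = sets borel" "finite_measure \<mu>"
    and "\<And>y. 0 < y \<Longrightarrow> emeasure \<mu> {y<..} = emeasure \<nu> {y<..}"
    and "\<And>a. a \<le> 0 \<Longrightarrow> emeasure \<mu> {..a} = emeasure \<nu> {..a}"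
  shows "\<mu> = \<nu>"
proof (rule measure_eqI_generator_eq[OF Int_stable_rays_split_at_0, of UNIV])
  define A where "A i = (if i = 0 then {..0} else {1 / real i<..})" for i :: nat
  show "range A \<subseteq> rays_split_at_0"
    unfolding A_def rays_split_at_0_def by auto
  have "x \<in> (\<Union>i. A i)" for x :: real
  proof (cases "x \<le> 0")
    case False
    then obtain n :: nat where "0 < n" "1 / real n < x"
      by (metis not_le ex_inverse_of_nat_less inverse_eq_divide)
    then show ?thesis
      by (intro UN_I[of n]) (auto simp: A_def)
  qed (auto simp: A_def)
  then show "(\<Union>i. A i) = UNIV"
    by auto
  show "emeasure \<mu> (A i) \<noteq> \<infinity>" for i
    using finite_measure.emeasure_finite[OF assms(3)] by simp
qed (use assms sets_borel_eq_sigma_rays_split_at_0 in \<open>auto simp: rays_split_at_0_def\<close>)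

lemma distr_eq_density_of_survival:
  assumes E: "neg_derivative_chain E" and N: "finite_measure N"
    and Y[measurable]: "Y \<in> borel_measurable N" and pos: "AE \<omega> in N. 0 < Y \<omega>"
    and surv: "\<And>y. 0 < y \<Longrightarrow> emeasure N {\<omega>\<in>space N. y < Y \<omega>} = ennreal (E 0 y)"
  shows "distr N lborel Y = density lborel (\<lambda>s. ennreal (if 0 < s then E 1 s else 0))"
    (is "_ = ?D")
proof -
  have [measurable]: "E 1 \<in> borel_measurable borel"
    using E by (rule neg_derivative_chainD)
  show ?thesis
  proof (rule measure_eqI_rays_split_at_0)
    show "finite_measure (distr N lborel Y)"
      using N by (intro finite_measure.finite_measure_distr) auto
    fix y :: real
    assume "0 < y"
    have "emeasure (distr N lborel Y) {y<..} = ennreal (E 0 y)"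
      using surv[OF \<open>0 < y\<close>] by (subst emeasure_distr) (auto simp: vimage_def Int_def conj_commute)
    also have "\<dots> = (\<integral>\<^sup>+ s. ennreal (E 1 s) * indicator {y<..} s \<partial>lborel)"
      using nn_integral_neg_derivative_chain[OF E \<open>0 < y\<close>, of 0] by simp
    also have "\<dots> = emeasure ?D {y<..}"
      using \<open>0 < y\<close> by (subst emeasure_density) (auto intro!: nn_integral_cong split: split_indicator)
    finally show "emeasure (distr N lborel Y) {y<..} = emeasure ?D {y<..}" .
  next
    fix a :: real
    assume "a \<le> 0"
    have "emeasure (distr N lborel Y) {..a} = emeasure N {\<omega>\<in>space N. Y \<omega> \<le> a}"
      by (subst emeasure_distr) (auto intro!: arg_cong[where f="emeasure N"])
    also have "\<dots> = 0"
      using pos \<open>a \<le> 0\<close> by (intro emeasure_eq_0_AE) (auto elim!: eventually_mono)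
    also have "\<dots> = emeasure ?D {..a}"
      using \<open>a \<le> 0\<close> by (subst emeasure_density) (auto intro!: nn_integral_zero' split: split_indicator)
    finally show "emeasure (distr N lborel Y) {..a} = emeasure ?D {..a}" .
  qed simp_all
qed

lemma distr_pair_eq_density_of_sections:
  fixes q :: "real \<Rightarrow> real \<Rightarrow> ennreal"
  assumes N: "finite_measure N"
    and [measurable]: "S \<in> borel_measurable N" "T \<in> borel_measurable N"
      "case_prod q \<in> borel_measurable (lborel \<Otimes>\<^sub>M lborel)"
    and sections: "\<And>a. a \<in> sets borel \<Longrightarrow>
      distr (density N (indicator {\<omega>\<in>space N. S \<omega> \<in> a})) lborel T
        = density lborel (\<lambda>y. \<integral>\<^sup>+ s. q s y * indicator a s \<partial>lborel)"
  shows "distr N (lborel \<Otimes>\<^sub>M lborel) (\<lambda>\<omega>. (S \<omega>, T \<omega>)) = density (lborel \<Otimes>\<^sub>M lborel) (case_prod q)"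
proof (rule measure_eqI_generator_eq[OF Int_stable_pair_measure_generator[of lborel lborel], of UNIV])
  show "emeasure (distr N (lborel \<Otimes>\<^sub>M lborel) (\<lambda>\<omega>. (S \<omega>, T \<omega>))) UNIV \<noteq> \<infinity>"
    using finite_measure.emeasure_finite[OF finite_measure.finite_measure_distr[OF N,
        of "\<lambda>\<omega>. (S \<omega>, T \<omega>)" "lborel \<Otimes>\<^sub>M lborel"]] by simp
  fix X :: "(real \<times> real) set"
  assume "X \<in> {a \<times> b |a b. a \<in> sets lborel \<and> b \<in> sets lborel}"
  then obtain a b where X: "X = a \<times> b" and [measurable]: "a \<in> sets borel" "b \<in> sets borel"
    by auto
  have "emeasure (distr N (lborel \<Otimes>\<^sub>M lborel) (\<lambda>\<omega>. (S \<omega>, T \<omega>))) X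
      = emeasure (distr (density N (indicator {\<omega>\<in>space N. S \<omega> \<in> a})) lborel T) b"
    unfolding X by (simp add: emeasure_distr emeasure_restricted) (auto intro!: arg_cong[where f="emeasure N"])
  also have "\<dots> = (\<integral>\<^sup>+ y. (\<integral>\<^sup>+ s. q s y * indicator a s \<partial>lborel) * indicator b y \<partial>lborel)"
    unfolding sections[OF \<open>a \<in> sets borel\<close>] by (subst emeasure_density) auto
  also have "\<dots> = (\<integral>\<^sup>+ y. (\<integral>\<^sup>+ s. q s y * indicator X (s, y) \<partial>lborel) \<partial>lborel)"
    unfolding X by (subst nn_integral_multc[symmetric]) (auto simp: indicator_times mult_ac)
  also have "\<dots> = (\<integral>\<^sup>+ p. case_prod q p * indicator X p \<partial>(lborel \<Otimes>\<^sub>M lborel))"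
    using lborel_pair.nn_integral_snd[of "\<lambda>p. case_prod q p * indicator X p"] unfolding X by simp
  also have "\<dots> = emeasure (density (lborel \<Otimes>\<^sub>M lborel) (case_prod q)) X"
    unfolding X by (subst emeasure_density) auto
  finally show "emeasure (distr N (lborel \<Otimes>\<^sub>M lborel) (\<lambda>\<omega>. (S \<omega>, T \<omega>))) X
      = emeasure (density (lborel \<Otimes>\<^sub>M lborel) (case_prod q)) X" .
qed (auto simp: sets_pair_measure intro!: exI[of _ UNIV])

lemma distr_add_eq_density_of_joint:
  fixes q :: "real \<Rightarrow> real \<Rightarrow> ennreal"
  assumes [measurable]: "S \<in> borel_measurable N" "T \<in> borel_measurable N"
      "case_prod q \<in> borel_measurable (lborel \<Otimes>\<^sub>M lborel)"
    and joint: "distr N (lborel \<Otimes>\<^sub>M lborel) (\<lambda>\<omega>. (S \<omega>, T \<omega>)) = density (lborel \<Otimes>\<^sub>M lborel) (case_prod q)"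
  shows "distr N lborel (\<lambda>\<omega>. S \<omega> + T \<omega>) = density lborel (\<lambda>u. \<integral>\<^sup>+ s. q s (u - s) \<partial>lborel)"
proof -
  have "distr N lborel (\<lambda>\<omega>. S \<omega> + T \<omega>)
      = distr (density (lborel \<Otimes>\<^sub>M lborel) (case_prod q)) lborel (\<lambda>p. fst p + snd p)"
    unfolding joint[symmetric] by (subst distr_distr) (auto simp: comp_def)
  also have "\<dots> = density lborel (\<lambda>u. \<integral>\<^sup>+ s. q s (u - s) \<partial>lborel)"
  proof (rule measure_eqI)
    fix B
    assume "B \<in> sets (distr (density (lborel \<Otimes>\<^sub>M lborel) (case_prod q)) lborel (\<lambda>p. fst p + snd p))"
    then have [measurable]: "B \<in> sets borel"
      by simp
    have "emeasure (distr (density (lborel \<Otimes>\<^sub>M lborel) (case_prod q)) lborel (\<lambda>p. fst p + snd p)) B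
        = emeasure (density (lborel \<Otimes>\<^sub>M lborel) (case_prod q))
            {p\<in>space (lborel \<Otimes>\<^sub>M lborel). fst p + snd p \<in> B}"
      by (subst emeasure_distr) (auto intro!: arg_cong[where f="emeasure _"])
    also have "\<dots> = (\<integral>\<^sup>+ p. case_prod q p *
        indicator {p\<in>space (lborel \<Otimes>\<^sub>M lborel). fst p + snd p \<in> B} p \<partial>(lborel \<Otimes>\<^sub>M lborel))"
      by (rule emeasure_density) measurable
    also have "\<dots> = (\<integral>\<^sup>+ p. case_prod q p * indicator B (fst p + snd p) \<partial>(lborel \<Otimes>\<^sub>M lborel))"
      by (intro nn_integral_cong) (auto simp: space_pair_measure split: split_indicator)
    also have "\<dots> = (\<integral>\<^sup>+ s. (\<integral>\<^sup>+ y. q s y * indicator B (s + y) \<partial>lborel) \<partial>lborel)"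
      by (subst lborel.nn_integral_fst[symmetric]) auto
    also have "\<dots> = (\<integral>\<^sup>+ s. (\<integral>\<^sup>+ u. q s (u - s) * indicator B u \<partial>lborel) \<partial>lborel)"
    proof (rule nn_integral_cong)
      fix s :: real
      show "(\<integral>\<^sup>+ y. q s y * indicator B (s + y) \<partial>lborel) = (\<integral>\<^sup>+ u. q s (u - s) * indicator B u \<partial>lborel)"
        using nn_integral_real_affine[of "\<lambda>u. q s (u - s) * indicator B u" 1 s] by simp
    qed
    also have "\<dots> = (\<integral>\<^sup>+ u. (\<integral>\<^sup>+ s. q s (u - s) \<partial>lborel) * indicator B u \<partial>lborel)"
      by (subst lborel_pair.Fubini') (auto intro!: nn_integral_cong simp: nn_integral_multc)
    also have "\<dots> = emeasure (density lborel (\<lambda>u. \<integral>\<^sup>+ s. q s (u - s) \<partial>lborel)) B"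
      by (subst emeasure_density) auto
    finally show "emeasure (distr (density (lborel \<Otimes>\<^sub>M lborel) (case_prod q)) lborel (\<lambda>p. fst p + snd p)) B
        = emeasure (density lborel (\<lambda>u. \<integral>\<^sup>+ s. q s (u - s) \<partial>lborel)) B" .
  qed simp
  finally show ?thesis .
qed

definition survival_sum_density :: "(nat \<Rightarrow> real \<Rightarrow> real) \<Rightarrow> nat \<Rightarrow> real \<Rightarrow> real" where
  "survival_sum_density E m s = (if 0 < s then s ^ m / fact m * E (Suc m) s else 0)"

text \<open>The joint density of \<open>(Y 0 + \<dots> + Y m, Y (m + 1))\<close>.\<close>

definition survival_joint_density :: "(nat \<Rightarrow> real \<Rightarrow> real) \<Rightarrow> nat \<Rightarrow> real \<Rightarrow> real \<Rightarrow> real" where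
  "survival_joint_density E m s y =
     (if 0 < s \<and> 0 < y then s ^ m / fact m * E (Suc (Suc m)) (s + y) else 0)"

lemma borel_measurable_survival_joint_density:
  assumes "neg_derivative_chain E"
  shows "(\<lambda>(s, y). ennreal (survival_joint_density E m s y)) \<in> borel_measurable (lborel \<Otimes>\<^sub>M lborel)"
proof -
  have [measurable]: "E k \<in> borel_measurable borel" for k
    using assms by (rule neg_derivative_chainD)
  show ?thesis
    unfolding survival_joint_density_def case_prod_beta' by measurable
qed

lemma nn_integral_survival_joint_density_tail:
  assumes E: "neg_derivative_chain E" and "0 < y"
  shows "(\<integral>\<^sup>+ y'. ennreal (survival_joint_density E m s y') * indicator {y<..} y' \<partial>lborel)
    = ennreal (survival_sum_density (\<lambda>k t. E k (t + y)) m s)"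
proof (cases "0 < s")
  case True
  have nonneg: "0 \<le> E k t" if "0 < t" for k t
    using E that by (rule neg_derivative_chainD)
  have [measurable]: "E k \<in> borel_measurable borel" for k
    using E by (rule neg_derivative_chainD)
  have "(\<integral>\<^sup>+ y'. ennreal (survival_joint_density E m s y') * indicator {y<..} y' \<partial>lborel)
      = (\<integral>\<^sup>+ y'. ennreal (s ^ m / fact m) * (ennreal (E (Suc (Suc m)) (y' + s)) * indicator {y<..} y') \<partial>lborel)"
    using True \<open>0 < y\<close>
    by (intro nn_integral_cong) (auto simp: survival_joint_density_def add.commute nonneg
        ennreal_mult[symmetric] split: split_indicator)
  also have "\<dots> = ennreal (s ^ m / fact m) *
      (\<integral>\<^sup>+ y'. ennreal (E (Suc (Suc m)) (y' + s)) * indicator {y<..} y' \<partial>lborel)"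
    by (rule nn_integral_cmult) measurable
  also have "\<dots> = ennreal (s ^ m / fact m) * ennreal (E (Suc m) (y + s))"
    using nn_integral_neg_derivative_chain[OF neg_derivative_chain_shift[OF E, of s] \<open>0 < y\<close>]
      True by simp
  finally show ?thesis
    using True \<open>0 < y\<close> by (simp add: survival_sum_density_def ennreal_mult[symmetric] nonneg add.commute)
qed (simp add: survival_joint_density_def survival_sum_density_def)

lemma distr_restrict_eq_density_survival_joint:
  assumes E: "neg_derivative_chain E" and N: "finite_measure N"
    and [measurable]: "S \<in> borel_measurable N" "T \<in> borel_measurable N" "a \<in> sets borel"
    and pos: "AE \<omega> in N. 0 < T \<omega>"
    and cond: "\<And>y. 0 < y \<Longrightarrow> distr (density N (indicator {\<omega>\<in>space N. y < T \<omega>})) lborel S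
      = density lborel (\<lambda>s. ennreal (survival_sum_density (\<lambda>k t. E k (t + y)) m s))"
  shows "distr (density N (indicator {\<omega>\<in>space N. S \<omega> \<in> a})) lborel T
    = density lborel (\<lambda>y. \<integral>\<^sup>+ s. ennreal (survival_joint_density E m s y) * indicator a s \<partial>lborel)"
    (is "distr ?Na lborel T = density lborel ?f")
proof -
  let ?q = "\<lambda>s y. ennreal (survival_joint_density E m s y)"
  have [measurable]: "E k \<in> borel_measurable borel" for k
    using E by (rule neg_derivative_chainD)
  have [measurable]: "case_prod ?q \<in> borel_measurable (lborel \<Otimes>\<^sub>M lborel)"
    using borel_measurable_survival_joint_density[OF E] .
  show ?thesis
  proof (rule measure_eqI_rays_split_at_0)
    show "finite_measure (distr ?Na lborel T)"
      using finite_measure.finite_measure_restricted[OF N]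
      by (intro finite_measure.finite_measure_distr) auto
  next
    fix y :: real
    assume "0 < y"
    have "emeasure (distr ?Na lborel T) {y<..}
        = emeasure (distr (density N (indicator {\<omega>\<in>space N. y < T \<omega>})) lborel S) a"
      by (simp add: emeasure_distr emeasure_restricted) (auto intro!: arg_cong[where f="emeasure N"])
    also have "\<dots> = (\<integral>\<^sup>+ s. (\<integral>\<^sup>+ y'. ?q s y' * indicator {y<..} y' \<partial>lborel) * indicator a s \<partial>lborel)"
      unfolding cond[OF \<open>0 < y\<close>] nn_integral_survival_joint_density_tail[OF E \<open>0 < y\<close>, symmetric]
      by (subst emeasure_density) auto
    also have "\<dots> = (\<integral>\<^sup>+ s. (\<integral>\<^sup>+ y'. ?q s y' * indicator a s * indicator {y<..} y' \<partial>lborel) \<partial>lborel)"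
      by (intro nn_integral_cong, subst nn_integral_multc[symmetric]) (auto simp: mult_ac)
    also have "\<dots> = (\<integral>\<^sup>+ y'. (\<integral>\<^sup>+ s. ?q s y' * indicator a s * indicator {y<..} y' \<partial>lborel) \<partial>lborel)"
      by (rule lborel_pair.Fubini'[symmetric]) measurable
    also have "\<dots> = emeasure (density lborel ?f) {y<..}"
      by (subst emeasure_density) (auto intro!: nn_integral_cong simp: nn_integral_multc)
    finally show "emeasure (distr ?Na lborel T) {y<..} = emeasure (density lborel ?f) {y<..}" .
  next
    fix b :: real
    assume "b \<le> 0"
    have "emeasure (distr ?Na lborel T) {..b} = emeasure N {\<omega>\<in>space N. S \<omega> \<in> a \<and> T \<omega> \<le> b}"
      by (subst emeasure_distr) (auto simp: emeasure_restricted intro!: arg_cong[where f="emeasure N"])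
    also have "\<dots> = 0"
      using pos \<open>b \<le> 0\<close> by (intro emeasure_eq_0_AE) (auto elim!: eventually_mono)
    also have "\<dots> = emeasure (density lborel ?f) {..b}"
      using \<open>b \<le> 0\<close> by (subst emeasure_density)
        (auto intro!: nn_integral_zero' simp: survival_joint_density_def split: split_indicator)
    finally show "emeasure (distr ?Na lborel T) {..b} = emeasure (density lborel ?f) {..b}" .
  qed simp_all
qed

lemma nn_integral_power_div_fact:
  assumes "0 < u"
  shows "(\<integral>\<^sup>+ s. ennreal (s ^ m / fact m) * indicator {0<..<u} s \<partial>lborel) = ennreal (u ^ Suc m / fact (Suc m))"
proof -
  have "(\<integral>\<^sup>+ s. ennreal (s ^ m / fact m) * indicator {0<..<u} s \<partial>lborel)
      = (\<integral>\<^sup>+ s. ennreal (s ^ m / fact m) * indicator {0..u} s \<partial>lborel)"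
  proof (rule nn_integral_cong_AE)
    show "AE s in lborel. ennreal (s ^ m / fact m) * indicator {0<..<u} s
        = ennreal (s ^ m / fact m) * indicator {0..u} s"
      using AE_lborel_singleton[of 0] AE_lborel_singleton[of u]
      by eventually_elim (auto split: split_indicator)
  qed
  also have "\<dots> = ennreal (u ^ Suc m / fact (Suc m) - 0 ^ Suc m / fact (Suc m))"
  proof (rule nn_integral_FTC_Icc)
    show "((\<lambda>s. s ^ Suc m / fact (Suc m)) has_real_derivative x ^ m / fact m) (at x)" for x :: real
      using DERIV_cdivide[OF DERIV_pow[of "Suc m" x], of "fact (Suc m)"]
      by (simp add: fact_Suc field_simps del: of_nat_Suc)
  qed (use assms in auto)
  finally show ?thesis
    by simp
qed

lemma nn_integral_survival_joint_density_diagonal: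
  assumes E: "neg_derivative_chain E"
  shows "(\<integral>\<^sup>+ s. ennreal (survival_joint_density E m s (u - s)) \<partial>lborel)
    = ennreal (survival_sum_density E (Suc m) u)"
proof (cases "0 < u")
  case True
  have nonneg: "0 \<le> E (Suc (Suc m)) u"
    using E True by (rule neg_derivative_chainD)
  have "(\<integral>\<^sup>+ s. ennreal (survival_joint_density E m s (u - s)) \<partial>lborel)
      = (\<integral>\<^sup>+ s. ennreal (E (Suc (Suc m)) u) * (ennreal (s ^ m / fact m) * indicator {0<..<u} s) \<partial>lborel)"
    by (intro nn_integral_cong)
      (auto simp: survival_joint_density_def nonneg ennreal_mult[symmetric] mult_ac split: split_indicator)
  also have "\<dots> = ennreal (E (Suc (Suc m)) u) * ennreal (u ^ Suc m / fact (Suc m))"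
    by (subst nn_integral_cmult) (auto simp: nn_integral_power_div_fact[OF True])
  finally show ?thesis
    using True nonneg by (simp add: survival_sum_density_def ennreal_mult[symmetric] mult_ac)
qed (auto intro!: nn_integral_zero' simp: survival_joint_density_def survival_sum_density_def)

lemma distr_add_eq_survival_sum_density:
  assumes E: "neg_derivative_chain E" and N: "finite_measure N"
    and [measurable]: "S \<in> borel_measurable N" "T \<in> borel_measurable N"
    and pos: "AE \<omega> in N. 0 < T \<omega>"
    and cond: "\<And>y. 0 < y \<Longrightarrow> distr (density N (indicator {\<omega>\<in>space N. y < T \<omega>})) lborel S
      = density lborel (\<lambda>s. ennreal (survival_sum_density (\<lambda>k t. E k (t + y)) m s))"
  shows "distr N lborel (\<lambda>\<omega>. S \<omega> + T \<omega>) = density lborel (\<lambda>u. ennreal (survival_sum_density E (Suc m) u))"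
proof -
  let ?q = "\<lambda>s y. ennreal (survival_joint_density E m s y)"
  have [measurable]: "case_prod ?q \<in> borel_measurable (lborel \<Otimes>\<^sub>M lborel)"
    using borel_measurable_survival_joint_density[OF E] .
  have "distr N (lborel \<Otimes>\<^sub>M lborel) (\<lambda>\<omega>. (S \<omega>, T \<omega>)) = density (lborel \<Otimes>\<^sub>M lborel) (case_prod ?q)"
    using distr_restrict_eq_density_survival_joint[OF E N _ _ _ pos cond]
    by (intro distr_pair_eq_density_of_sections[OF N]) simp_all
  then have "distr N lborel (\<lambda>\<omega>. S \<omega> + T \<omega>) = density lborel (\<lambda>u. \<integral>\<^sup>+ s. ?q s (u - s) \<partial>lborel)"
    by (intro distr_add_eq_density_of_joint) simp_all
  then show ?thesis
    by (simp only: nn_integral_survival_joint_density_diagonal[OF E])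
qed

text \<open>
  The survival function is only required at points with positive sum: at \<open>0\<close> the chain
  may take a junk value (\<open>exp_sqrt_deriv l 0 0 = 0\<close> because \<open>0 powr 0 = 0\<close>).
\<close>

lemma distr_sum_eq_density_of_survival:
  assumes "neg_derivative_chain E" and "finite_measure N"
    and "\<And>i. i < Suc m \<Longrightarrow> Y i \<in> borel_measurable N"
    and "AE \<omega> in N. \<forall>i<Suc m. 0 < Y i \<omega>"
    and "\<And>x. (\<forall>i<Suc m. 0 \<le> x i) \<Longrightarrow> 0 < (\<Sum>i<Suc m. x i) \<Longrightarrow>
      emeasure N {\<omega>\<in>space N. \<forall>i<Suc m. x i < Y i \<omega>} = ennreal (E 0 (\<Sum>i<Suc m. x i))"
  shows "distr N lborel (\<lambda>\<omega>. \<Sum>i<Suc m. Y i \<omega>) = density lborel (\<lambda>s. ennreal (survival_sum_density E m s))"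
  using assms
proof (induction m arbitrary: E N)
  case 0
  have "distr N lborel (Y 0) = density lborel (\<lambda>s. ennreal (if 0 < s then E 1 s else 0))"
    using 0 by (intro distr_eq_density_of_survival) (auto elim!: eventually_mono dest: 0(5)[of "\<lambda>_. _"])
  moreover have "survival_sum_density E 0 = (\<lambda>s. if 0 < s then E 1 s else 0)"
    by (simp add: survival_sum_density_def fun_eq_iff)
  ultimately show ?case
    by simp
next
  case (Suc m)
  note E = Suc.prems(1) and N = Suc.prems(2)
  have [measurable]: "Y i \<in> borel_measurable N" if "i < Suc (Suc m)" for i
    using Suc.prems(3) that .
  let ?S = "\<lambda>\<omega>. \<Sum>i<Suc m. Y i \<omega>"
  have cond: "distr (density N (indicator {\<omega>\<in>space N. y < Y (Suc m) \<omega>})) lborel ?S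
      = density lborel (\<lambda>s. ennreal (survival_sum_density (\<lambda>k t. E k (t + y)) m s))" if "0 < y" for y
  proof (rule Suc.IH)
    let ?Ny = "density N (indicator {\<omega>\<in>space N. y < Y (Suc m) \<omega>})"
    show "neg_derivative_chain (\<lambda>k t. E k (t + y))"
      using neg_derivative_chain_shift[OF E] \<open>0 < y\<close> by simp
    show "finite_measure ?Ny"
      using finite_measure.finite_measure_restricted[OF N] by simp
    show "Y i \<in> borel_measurable ?Ny" if "i < Suc m" for i
      using that by simp
    show "AE \<omega> in ?Ny. \<forall>i<Suc m. 0 < Y i \<omega>"
      using Suc.prems(4) by (subst AE_density) (auto elim!: eventually_mono)
    fix x :: "nat \<Rightarrow> real"
    assume x: "\<forall>i<Suc m. 0 \<le> x i"
    let ?x = "x(Suc m := y)"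
    have "emeasure ?Ny {\<omega>\<in>space ?Ny. \<forall>i<Suc m. x i < Y i \<omega>}
        = emeasure N {\<omega>\<in>space N. \<forall>i<Suc (Suc m). ?x i < Y i \<omega>}"
      by (subst emeasure_restricted) (auto simp: less_Suc_eq intro!: arg_cong[where f="emeasure N"])
    also have "\<dots> = ennreal (E 0 (\<Sum>i<Suc (Suc m). ?x i))"
    proof (rule Suc.prems(5))
      show "\<forall>i<Suc (Suc m). 0 \<le> ?x i"
        using x \<open>0 < y\<close> by (simp add: less_Suc_eq)
      have "0 \<le> (\<Sum>i<Suc m. x i)"
        using x by (intro sum_nonneg) auto
      with \<open>0 < y\<close> show "0 < (\<Sum>i<Suc (Suc m). ?x i)"
        by simp
    qed
    also have "(\<Sum>i<Suc (Suc m). ?x i) = (\<Sum>i<Suc m. x i) + y"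
      by simp
    finally show "emeasure ?Ny {\<omega>\<in>space ?Ny. \<forall>i<Suc m. x i < Y i \<omega>} = ennreal (E 0 ((\<Sum>i<Suc m. x i) + y))" .
  qed
  have "AE \<omega> in N. 0 < Y (Suc m) \<omega>"
    using Suc.prems(4) by (auto elim!: eventually_mono)
  from distr_add_eq_survival_sum_density[OF E N _ _ this cond] show ?case
    by simp
qed

section \<open>Derivatives of \<open>exp (- l * sqrt s)\<close>\<close>

fun exp_sqrt_coeff :: "real \<Rightarrow> nat \<Rightarrow> nat \<Rightarrow> real" where
  "exp_sqrt_coeff l 0 j = (if j = 0 then 1 else 0)"
| "exp_sqrt_coeff l (Suc k) j = (real k - real j / 2) * exp_sqrt_coeff l k j
     + (if j > 0 then l / 2 * exp_sqrt_coeff l k (j - 1) else 0)"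

declare exp_sqrt_coeff.simps(2)[simp del]

text \<open>On \<open>s > 0\<close> this is \<open>(-1)^k\<close> times the \<open>k\<close>-th derivative of \<open>s \<mapsto> exp (- l * sqrt s)\<close>.\<close>

definition exp_sqrt_deriv :: "real \<Rightarrow> nat \<Rightarrow> real \<Rightarrow> real" where
  "exp_sqrt_deriv l k s =
     exp (- l * sqrt s) * (\<Sum>j\<le>k. exp_sqrt_coeff l k j * s powr (real j / 2 - real k))"

lemma exp_sqrt_coeff_eq_0: "k < j \<Longrightarrow> exp_sqrt_coeff l k j = 0"
  by (induction k arbitrary: j) (auto simp: exp_sqrt_coeff.simps)

lemma exp_sqrt_coeff_nonneg: "0 \<le> l \<Longrightarrow> 0 \<le> exp_sqrt_coeff l k j"
proof (induction k arbitrary: j)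
  case (Suc k)
  have "0 \<le> (real k - real j / 2) * exp_sqrt_coeff l k j"
    using Suc by (cases "k < j") (auto simp: exp_sqrt_coeff_eq_0)
  then show ?case
    using Suc by (auto simp: exp_sqrt_coeff.simps)
qed simp

lemma exp_sqrt_powr_has_derivative:
  assumes "0 < s"
  shows "((\<lambda>s. exp (- l * sqrt s) * s powr p) has_real_derivative
           exp (- l * sqrt s) * (p * s powr (p - 1) - l / 2 * s powr (p - 1/2))) (at s)"
proof -
  have "s powr (p - 1/2) = s powr p / sqrt s"
    using assms by (simp add: powr_diff powr_half_sqrt)
  then have "inverse (sqrt s) * s powr p = s powr (p - 1/2)"
    by (simp add: field_simps)
  then show ?thesis
    using assms by (auto intro!: derivative_eq_intros simp: algebra_simps)
qed

lemma exp_sqrt_deriv_has_derivative: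
  assumes "0 < s"
  shows "(exp_sqrt_deriv l k has_real_derivative - exp_sqrt_deriv l (Suc k) s) (at s)"
proof -
  let ?e = "exp (- l * sqrt s)"
  let ?p = "\<lambda>j. real j / 2 - real k"
  have "exp_sqrt_deriv l k =
      (\<lambda>s. \<Sum>j\<le>k. exp_sqrt_coeff l k j * (exp (- l * sqrt s) * s powr ?p j))"
    by (auto simp: exp_sqrt_deriv_def sum_distrib_left algebra_simps fun_eq_iff)
  then have deriv: "(exp_sqrt_deriv l k has_real_derivative
      (\<Sum>j\<le>k. exp_sqrt_coeff l k j *
         (?e * (?p j * s powr (?p j - 1) - l / 2 * s powr (?p j - 1/2))))) (at s)"
    by (simp only:) (intro DERIV_sum DERIV_cmult exp_sqrt_powr_has_derivative assms)
  have first: "(\<Sum>j\<le>Suc k. (real k - real j / 2) * exp_sqrt_coeff l k j * s powr (real j / 2 - real (Suc k)))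
      = (\<Sum>j\<le>k. (real k - real j / 2) * exp_sqrt_coeff l k j * s powr (?p j - 1))"
    by (simp add: exp_sqrt_coeff_eq_0 algebra_simps)
  have second: "(\<Sum>j\<le>Suc k. (if j > 0 then l / 2 * exp_sqrt_coeff l k (j - 1) else 0)
        * s powr (real j / 2 - real (Suc k)))
      = (\<Sum>j\<le>k. l / 2 * exp_sqrt_coeff l k j * s powr (?p j - 1/2))"
    by (subst sum.atMost_Suc_shift) (simp add: algebra_simps add_divide_distrib)
  have "- exp_sqrt_deriv l (Suc k) s = - ?e *
      ((\<Sum>j\<le>Suc k. (real k - real j / 2) * exp_sqrt_coeff l k j * s powr (real j / 2 - real (Suc k)))
     + (\<Sum>j\<le>Suc k. (if j > 0 then l / 2 * exp_sqrt_coeff l k (j - 1) else 0)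
          * s powr (real j / 2 - real (Suc k))))"
    by (simp add: exp_sqrt_deriv_def exp_sqrt_coeff.simps sum.distrib [symmetric] algebra_simps
        del: of_nat_Suc)
  also have "\<dots> = (\<Sum>j\<le>k. exp_sqrt_coeff l k j *
         (?e * (?p j * s powr (?p j - 1) - l / 2 * s powr (?p j - 1/2))))"
    unfolding first second
    by (simp add: sum_distrib_left sum.distrib [symmetric] sum_negf [symmetric] algebra_simps)
  finally show ?thesis
    using deriv by simp
qed

lemma tendsto_exp_neg_sqrt_powr:
  assumes "0 < l" "p \<le> 0"
  shows "((\<lambda>s. exp (- l * sqrt s) * s powr p) \<longlongrightarrow> 0) at_top"
proof -
  have "filterlim (\<lambda>s. l * sqrt s) at_top at_top"
    using filterlim_tendsto_pos_mult_at_top[OF tendsto_const \<open>0 < l\<close> sqrt_at_top] .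
  then have "filterlim (\<lambda>s. - l * sqrt s) at_bot at_top"
    by (simp add: filterlim_uminus_at_top)
  then have exp: "((\<lambda>s. exp (- l * sqrt s)) \<longlongrightarrow> 0) at_top"
    by (rule filterlim_compose[OF exp_at_bot])
  show ?thesis
  proof (cases "p = 0")
    case True
    have "eventually (\<lambda>s. exp (- l * sqrt s) = exp (- l * sqrt s) * s powr p) at_top"
      using eventually_gt_at_top[of 0] by eventually_elim (simp add: True)
    with exp show ?thesis
      by (rule Lim_transform_eventually)
  next
    case False
    with \<open>p \<le> 0\<close> have "((\<lambda>s. s powr p) \<longlongrightarrow> 0) at_top"
      by (intro tendsto_neg_powr filterlim_ident) simp
    from tendsto_mult[OF exp this] show ?thesis
      by simp
  qed
qed

lemma neg_derivative_chain_exp_sqrt_deriv: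
  assumes "0 < l"
  shows "neg_derivative_chain (exp_sqrt_deriv l)"
  unfolding neg_derivative_chain_def
proof (intro conjI allI impI)
  fix k
  have eq: "exp_sqrt_deriv l k =
      (\<lambda>s. \<Sum>j\<le>k. exp_sqrt_coeff l k j * (exp (- l * sqrt s) * s powr (real j / 2 - real k)))"
    by (auto simp: exp_sqrt_deriv_def sum_distrib_left algebra_simps fun_eq_iff)
  have "((\<lambda>s. \<Sum>j\<le>k. exp_sqrt_coeff l k j * (exp (- l * sqrt s) * s powr (real j / 2 - real k)))
      \<longlongrightarrow> 0) at_top"
    using assms by (intro tendsto_null_sum tendsto_mult_right_zero tendsto_exp_neg_sqrt_powr) auto
  then show "(exp_sqrt_deriv l k \<longlongrightarrow> 0) at_top"
    unfolding eq .
  show "exp_sqrt_deriv l k \<in> borel_measurable borel"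
    unfolding exp_sqrt_deriv_def by measurable
next
  fix k and s :: real
  assume "0 < s"
  then show "(exp_sqrt_deriv l k has_real_derivative - exp_sqrt_deriv l (Suc k) s) (at s)"
    by (rule exp_sqrt_deriv_has_derivative)
  show "0 \<le> exp_sqrt_deriv l k s"
    unfolding exp_sqrt_deriv_def using assms
    by (intro mult_nonneg_nonneg sum_nonneg) (simp_all add: exp_sqrt_coeff_nonneg)
qed

definition exp_sqrt_coeff_closed :: "real \<Rightarrow> nat \<Rightarrow> nat \<Rightarrow> real" where
  "exp_sqrt_coeff_closed l n j =
     l / 2 ^ (2 * n - 1) * (fact (2 * (n - 1) - j) / (fact (n - j - 1) * fact j)) * (2 * l) ^ j"

lemma exp_sqrt_coeff_closed_rec_first:
  "exp_sqrt_coeff_closed l (Suc (Suc m)) 0 = (real (Suc m) - 1/2) * exp_sqrt_coeff_closed l (Suc m) 0"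
proof -
  define F :: real where "F = fact (2 * m)"
  define G :: real where "G = fact m"
  define P :: real where "P = 2 ^ (2 * m + 1)"
  have pos: "F > 0" "G > 0" "P > 0"
    by (auto simp: F_def G_def P_def)
  have "fact (2 * m + 2) = (2 * real m + 2) * (2 * real m + 1) * (fact (2 * m) :: real)"
    "fact (m + 1) = (real m + 1) * (fact m :: real)" "(2::real) ^ (2 * m + 3) = 4 * 2 ^ (2 * m + 1)"
    "2 * Suc (Suc m) - 1 = 2 * m + 3" "2 * (Suc (Suc m) - 1) = 2 * m + 2"
    by (simp_all add: fact_Suc power_add algebra_simps)
  then have lhs: "exp_sqrt_coeff_closed l (Suc (Suc m)) 0
      = l / (4 * P) * ((2 * real m + 2) * (2 * real m + 1) * F / ((real m + 1) * G))"
    unfolding exp_sqrt_coeff_closed_def F_def G_def P_def by (simp add: algebra_simps)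
  have "2 * Suc m - 1 = 2 * m + 1"
    by simp
  then have rhs: "exp_sqrt_coeff_closed l (Suc m) 0 = l / P * (F / G)"
    unfolding exp_sqrt_coeff_closed_def F_def G_def P_def by simp
  define a where "a = real m + 1"
  have a: "0 < a" "real m = a - 1"
    by (auto simp: a_def)
  show ?thesis
    unfolding lhs rhs of_nat_Suc a(2) using pos a(1) by (simp add: field_simps)
qed

lemma exp_sqrt_coeff_closed_rec_last:
  "exp_sqrt_coeff_closed l (Suc (Suc m)) (Suc m) = l / 2 * exp_sqrt_coeff_closed l (Suc m) m"
proof -
  define P :: real where "P = 2 ^ (2 * m + 1)"
  have "(2::real) ^ (2 * m + 3) = 4 * 2 ^ (2 * m + 1)" "2 * Suc (Suc m) - 1 = 2 * m + 3"
    "2 * (Suc (Suc m) - 1) - Suc m = Suc m"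
    by (simp_all add: power_add)
  then have lhs: "exp_sqrt_coeff_closed l (Suc (Suc m)) (Suc m) = l / (4 * P) * (2 * l) ^ Suc m"
    unfolding exp_sqrt_coeff_closed_def P_def by simp
  have "2 * Suc m - 1 = 2 * m + 1" "2 * (Suc m - 1) - m = m"
    by simp_all
  then have rhs: "exp_sqrt_coeff_closed l (Suc m) m = l / P * (2 * l) ^ m"
    unfolding exp_sqrt_coeff_closed_def P_def by simp
  have "P > 0"
    by (simp add: P_def)
  then show ?thesis
    unfolding lhs rhs by (simp add: field_simps)
qed

lemma exp_sqrt_coeff_closed_rec_middle:
  assumes "m = Suc i + r"
  shows "exp_sqrt_coeff_closed l (Suc (Suc m)) (Suc i)
    = (real (Suc m) - real (Suc (Suc i)) / 2) * exp_sqrt_coeff_closed l (Suc m) (Suc i)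
      + l / 2 * exp_sqrt_coeff_closed l (Suc m) i"
proof -
  define F :: real where "F = fact (i + 2 * r + 1)"
  define G :: real where "G = fact r"
  define H :: real where "H = fact i"
  define P :: real where "P = 2 ^ (2 * i + 2 * r + 3)"
  define Q :: real where "Q = (2 * l) ^ i"
  have pos: "F > 0" "G > 0" "H > 0" "P > 0"
    by (auto simp: F_def G_def H_def P_def)
  have idx: "2 * Suc m - 1 = 2 * i + 2 * r + 3" "2 * (Suc (Suc m) - 1) - Suc i = i + 2 * r + 3"
     "Suc (Suc m) - Suc i - 1 = r + 1" "2 * Suc (Suc m) - 1 = 2 * i + 2 * r + 5"
     "2 * (Suc m - 1) - Suc i = i + 2 * r + 1" "Suc m - Suc i - 1 = r"
     "2 * (Suc m - 1) - i = i + 2 * r + 2" "Suc m - i - 1 = r + 1"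
    using assms by auto
  have facts: "fact (i + 2 * r + 3) = (real i + 2 * real r + 3) * (real i + 2 * real r + 2) * F"
     "fact (i + 2 * r + 2) = (real i + 2 * real r + 2) * F"
     "fact (r + 1) = (real r + 1) * G" "fact (Suc i) = (real i + 1) * H"
    by (simp_all add: F_def G_def H_def fact_Suc algebra_simps numeral_3_eq_3 numeral_2_eq_2)
  have powers: "(2::real) ^ (2 * i + 2 * r + 5) = 4 * P" "(2::real) ^ (2 * i + 2 * r + 3) = P"
    "(2 * l) ^ Suc i = 2 * l * Q"
    by (simp_all add: power_add P_def Q_def)
  have c1: "exp_sqrt_coeff_closed l (Suc (Suc m)) (Suc i) = l / (4 * P) *
      ((real i + 2 * real r + 3) * (real i + 2 * real r + 2) * F / ((real r + 1) * G * ((real i + 1) * H)))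
      * (2 * l * Q)"
    unfolding exp_sqrt_coeff_closed_def idx facts powers by simp
  have c2: "exp_sqrt_coeff_closed l (Suc m) (Suc i) = l / P * (F / (G * ((real i + 1) * H))) * (2 * l * Q)"
    unfolding exp_sqrt_coeff_closed_def idx facts powers F_def G_def by simp
  have c3: "exp_sqrt_coeff_closed l (Suc m) i = l / P * ((real i + 2 * real r + 2) * F / ((real r + 1) * G * H)) * Q"
    unfolding exp_sqrt_coeff_closed_def idx facts powers H_def Q_def by simp
  have m: "real m = real i + real r + 1"
    using assms by simp
  define R where "R = real r + 1"
  define I where "I = real i + 1"
  have RI: "R > 0" "I > 0" "real r = R - 1" "real i = I - 1"
    by (auto simp: R_def I_def)
  show ?thesis
    unfolding c1 c2 c3 m of_nat_Suc RI(3,4) using pos RI(1,2) by (simp add: field_simps)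
qed

lemma exp_sqrt_coeff_Suc_eq_closed:
  "exp_sqrt_coeff l (Suc m) 0 = 0 \<and>
   (\<forall>j\<le>m. exp_sqrt_coeff l (Suc m) (Suc j) = exp_sqrt_coeff_closed l (Suc m) j)"
proof (induction m)
  case 0
  then show ?case
    by (auto simp: exp_sqrt_coeff_closed_def exp_sqrt_coeff.simps)
next
  case (Suc m)
  have "exp_sqrt_coeff l (Suc (Suc m)) (Suc j) = exp_sqrt_coeff_closed l (Suc (Suc m)) j"
    if "j \<le> Suc m" for j
  proof -
    have rec: "exp_sqrt_coeff l (Suc (Suc m)) (Suc j) = (real (Suc m) - real (Suc j) / 2)
        * exp_sqrt_coeff l (Suc m) (Suc j) + l / 2 * exp_sqrt_coeff l (Suc m) j"
      by (simp only: exp_sqrt_coeff.simps if_True zero_less_Suc diff_Suc_1)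
    consider "j = 0" | i where "j = Suc i" "i < m" | "j = Suc m"
    proof (cases j)
      case (Suc i)
      then show ?thesis
        using that \<open>j \<le> Suc m\<close> by (cases "i = m") auto
    qed
    then show ?thesis
    proof cases
      case 1
      then show ?thesis
        using Suc.IH unfolding rec by (simp add: exp_sqrt_coeff_closed_rec_first)
    next
      case 2
      then have "m = Suc i + (m - Suc i)"
        by simp
      from exp_sqrt_coeff_closed_rec_middle[OF this] show ?thesis
        using Suc.IH 2 unfolding rec by simp
    next
      case 3
      then show ?thesis
        using Suc.IH unfolding rec by (simp add: exp_sqrt_coeff_eq_0 exp_sqrt_coeff_closed_rec_last)
    qed
  qed
  with Suc.IH show ?case
    by (simp add: exp_sqrt_coeff.simps)
qed

lemma survival_sum_density_exp_sqrt_deriv: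
  assumes "0 < s" "n = Suc m"
  shows "survival_sum_density (exp_sqrt_deriv l) m s = l / (2 ^ (2 * n - 1) * Gamma (real n)) *
    (\<Sum>k = 0..n - 1. fact (2 * (n - 1) - k) / (fact (n - k - 1) * fact k)
        * (2 * l) ^ k * s powr ((real k - 1) / 2) * exp (- l * sqrt s))"
proof -
  have powr: "s ^ m * s powr (real (Suc j) / 2 - real (Suc m)) = s powr ((real j - 1) / 2)" for j
  proof -
    have "s ^ m * s powr (real (Suc j) / 2 - real (Suc m)) = s powr (real m + (real (Suc j) / 2 - real (Suc m)))"
      unfolding powr_add using \<open>0 < s\<close> by (simp add: powr_realpow)
    also have "real m + (real (Suc j) / 2 - real (Suc m)) = (real j - 1) / 2"
      by (simp add: field_simps)
    finally show ?thesis .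
  qed
  have "(\<Sum>j\<le>Suc m. exp_sqrt_coeff l (Suc m) j * s powr (real j / 2 - real (Suc m)))
      = (\<Sum>j\<le>m. exp_sqrt_coeff_closed l (Suc m) j * s powr (real (Suc j) / 2 - real (Suc m)))"
    using exp_sqrt_coeff_Suc_eq_closed[of l m] by (subst sum.atMost_Suc_shift) simp
  then have "survival_sum_density (exp_sqrt_deriv l) m s = (\<Sum>j\<le>m. exp (- l * sqrt s) / fact m *
      exp_sqrt_coeff_closed l (Suc m) j * (s ^ m * s powr (real (Suc j) / 2 - real (Suc m))))"
    using \<open>0 < s\<close> by (simp add: survival_sum_density_def exp_sqrt_deriv_def sum_distrib_left mult_ac)
  also have "\<dots> = (\<Sum>j\<le>m. l / (2 ^ (2 * Suc m - 1) * fact m) * (fact (2 * (Suc m - 1) - j)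
      / (fact (Suc m - j - 1) * fact j) * (2 * l) ^ j * s powr ((real j - 1) / 2) * exp (- l * sqrt s)))"
    unfolding powr exp_sqrt_coeff_closed_def by (simp add: field_simps)
  also have "\<dots> = l / (2 ^ (2 * n - 1) * Gamma (real n)) *
    (\<Sum>k = 0..n - 1. fact (2 * (n - 1) - k) / (fact (n - k - 1) * fact k)
        * (2 * l) ^ k * s powr ((real k - 1) / 2) * exp (- l * sqrt s))"
  proof -
    have "Gamma (real n) = fact m"
      using Gamma_fact[of m] \<open>n = Suc m\<close> by (simp add: add.commute)
    then show ?thesis
      using \<open>n = Suc m\<close> by (simp add: sum_distrib_left atLeast0AtMost)
  qed
  finally show ?thesis .
qed

theorem theorem7:
  fixes M :: "'a measure" and X :: "nat \<Rightarrow> 'a \<Rightarrow> real" and lam :: real and n :: nat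
  assumes "prob_space M"
    and "lam > 0"
    and "n \<ge> 1"
    and "\<And>i. i < n \<Longrightarrow> X i \<in> borel_measurable M"
    and "\<And>x :: nat \<Rightarrow> real. (\<forall>i<n. x i \<ge> 0) \<Longrightarrow>
           measure M {\<omega> \<in> space M. \<forall>i<n. X i \<omega> > x i}
             = exp (- lam * sqrt (\<Sum>i<n. x i))"
  shows "distributed M lborel (\<lambda>\<omega>. \<Sum>i<n. X i \<omega>)
           (\<lambda>x. ennreal (if x > 0 then
              lam / (2 ^ (2 * n - 1) * Gamma (real n)) *
              (\<Sum>k = 0..n - 1. fact (2 * (n - 1) - k) / (fact (n - k - 1) * fact k)
                  * (2 * lam) ^ k * x powr ((real k - 1) / 2) * exp (- lam * sqrt x))
            else 0))"
proof -
  interpret prob_space M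
    by fact
  obtain m where n: "n = Suc m"
    using \<open>n \<ge> 1\<close> by (cases n) auto
  have [measurable]: "X i \<in> borel_measurable M" if "i < n" for i
    using assms(4) that .
  have surv: "emeasure M {\<omega>\<in>space M. \<forall>i<n. x i < X i \<omega>} = ennreal (exp (- lam * sqrt (\<Sum>i<n. x i)))"
    if "\<forall>i<n. 0 \<le> x i" for x
    using assms(5)[OF that] by (simp add: emeasure_eq_measure)
  have "prob {\<omega>\<in>space M. \<forall>i<n. 0 < X i \<omega>} = 1"
    using assms(5)[of "\<lambda>_. 0"] by simp
  from AE_prob_1[OF this] have "AE \<omega> in M. \<forall>i<n. 0 < X i \<omega>"
    by simp
  then have "distr M lborel (\<lambda>\<omega>. \<Sum>i<n. X i \<omega>)
      = density lborel (\<lambda>s. ennreal (survival_sum_density (exp_sqrt_deriv lam) m s))"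
    unfolding n using surv finite_measure_axioms
    by (intro distr_sum_eq_density_of_survival neg_derivative_chain_exp_sqrt_deriv \<open>lam > 0\<close>)
      (simp_all add: n exp_sqrt_deriv_def)
  also have "\<dots> = density lborel (\<lambda>x. ennreal (if x > 0 then
              lam / (2 ^ (2 * n - 1) * Gamma (real n)) *
              (\<Sum>k = 0..n - 1. fact (2 * (n - 1) - k) / (fact (n - k - 1) * fact k)
                  * (2 * lam) ^ k * x powr ((real k - 1) / 2) * exp (- lam * sqrt x))
            else 0))"
    using survival_sum_density_exp_sqrt_deriv[OF _ n]
    by (intro arg_cong[where f="density lborel"]) (auto simp: survival_sum_density_def fun_eq_iff)
  finally show ?thesis
    unfolding distributed_def by (auto intro!: borel_measurable_sum)
qed

end
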